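(* Let $D_x$ be a distribution over features $\mathcal{X}$, let $\alpha>0$, and let $k\ge1$ be odd. Let the label distribution be $D^\alpha_y=1-2\,\mathrm{Bernoulli}(\alpha)$ (so $y=-1$ with probability $\alpha$ and $y=1$ otherwise), and let $D=D_x\otimes D^\alpha_y$ be the joint distribution with independent features and labels. Let $h:\mathcal{X}\to\{-1,1\}$ be the $k$-nearest-neighbors classifier trained on $S\sim D^n$ with $n\ge k$, and let $x\in\mathcal{X}$. Then $$\mathbb{E}_{S\sim D^n}[h(x)]=-1+2\phi_k(\alpha),\qquad \phi_k(\alpha)=\Pr\left(\mathrm{Binomial}(k,\alpha)\le\lfloor k/2\rfloor\right).$$
   Context: The $k$-nearest-neighbors classifier (with $k$ odd) trained on $S=\{(x_i,y_i)\}_{i=1}^n$ returns, for a query $x$, the majority label among the $k$ training points whose features are nearest to $x$ (with respect to a metric on $\mathcal{X}$; the set of neighbors depends on the training features only). *)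

theory Defs
  imports "HOL-Probability.Probability"
begin

definition knn_selection ::
  "nat \<Rightarrow> nat \<Rightarrow> ((nat \<Rightarrow> 'a::metric_space) \<Rightarrow> 'a \<Rightarrow> nat set) \<Rightarrow> bool" where
  "knn_selection n k N \<longleftrightarrow>
     (\<forall>xs x. N xs x \<subseteq> {..<n} \<and> card (N xs x) = k \<and>
        (\<forall>i\<in>N xs x. \<forall>j\<in>{..<n} - N xs x. dist (xs i) x \<le> dist (xs j) x))"

definition knn_classifier ::
  "((nat \<Rightarrow> 'a) \<Rightarrow> 'a \<Rightarrow> nat set) \<Rightarrow> (nat \<Rightarrow> 'a \<times> real) \<Rightarrow> 'a \<Rightarrow> real" where
  "knn_classifier N S x =
     (if (\<Sum>i\<in>N (\<lambda>i. fst (S i)) x. snd (S i)) > 0 then 1 else -1)"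

definition label_pmf :: "real \<Rightarrow> real pmf" where
  "label_pmf \<alpha> = map_pmf (\<lambda>b. if b then -1 else 1) (bernoulli_pmf \<alpha>)"

definition phi :: "nat \<Rightarrow> real \<Rightarrow> real" where
  "phi k \<alpha> = measure_pmf.prob (binomial_pmf k \<alpha>) {..k div 2}"

end

theory Submission
  imports Defs
begin

(* The neighbour set of x depends on the training features only, and the features are independent
   of the labels. By Fubini we may therefore fix the features first: the classifier is then a
   majority vote over k fixed coordinates of an i.i.d. label vector. With k odd, the vote is 1
   exactly when at most k div 2 of these k labels are -1, and the number of -1 labels is
   Binomial(k, alpha). *)

lemma measurable_zip_PiM:
  "(\<lambda>(xs, ys). \<lambda>i\<in>I. (xs i, ys i))
     \<in> measurable (PiM I M \<Otimes>\<^sub>M PiM I L) (PiM I (\<lambda>i. M i \<Otimes>\<^sub>M L i))"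
  by measurable

lemma distr_PiM_pair_measure_zip:
  assumes I: "finite I"
    and M: "\<And>i. sigma_finite_measure (M i)" and L: "\<And>i. sigma_finite_measure (L i)"
  shows "distr (PiM I M \<Otimes>\<^sub>M PiM I L) (PiM I (\<lambda>i. M i \<Otimes>\<^sub>M L i)) (\<lambda>(xs, ys). \<lambda>i\<in>I. (xs i, ys i))
           = PiM I (\<lambda>i. M i \<Otimes>\<^sub>M L i)"
proof -
  interpret M: product_sigma_finite M
    by (intro product_sigma_finite.intro M)
  interpret L: finite_product_sigma_finite L I
    by (intro finite_product_sigma_finite.intro product_sigma_finite.intro
        finite_product_sigma_finite_axioms.intro L I)
  interpret MxL: product_sigma_finite "\<lambda>i. M i \<Otimes>\<^sub>M L i"
    by (intro product_sigma_finite.intro sigma_finite_pair_measure M L)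
  let ?zip = "\<lambda>(xs, ys). \<lambda>i\<in>I. (xs i, ys i)"
  let ?\<Omega> = "space (PiM I M \<Otimes>\<^sub>M PiM I L)"
  let ?D = "distr (PiM I M \<Otimes>\<^sub>M PiM I L) (PiM I (\<lambda>i. M i \<Otimes>\<^sub>M L i)) ?zip"
  show ?thesis
  proof (rule MxL.PiM_eqI[OF I])
    fix A assume A: "\<And>i. i \<in> I \<Longrightarrow> A i \<in> sets (M i \<Otimes>\<^sub>M L i)"
    have slice: "Pair xs -` (?zip -` Pi\<^sub>E I A \<inter> ?\<Omega>) = Pi\<^sub>E I (\<lambda>i. Pair (xs i) -` A i)"
      if "xs \<in> space (PiM I M)" for xs
    proof (intro set_eqI iffI)
      fix ys assume "ys \<in> Pi\<^sub>E I (\<lambda>i. Pair (xs i) -` A i)"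
      moreover have "Pair (xs i) -` A i \<subseteq> space (L i)" if "i \<in> I" for i
        using A[OF that, THEN sets.sets_into_space] by (auto simp: space_pair_measure)
      ultimately show "ys \<in> Pair xs -` (?zip -` Pi\<^sub>E I A \<inter> ?\<Omega>)"
        using that by (auto simp: space_pair_measure space_PiM PiE_iff)
    qed (auto simp: space_pair_measure space_PiM PiE_iff split: if_split_asm)
    have "emeasure ?D (Pi\<^sub>E I A) = emeasure (PiM I M \<Otimes>\<^sub>M PiM I L) (?zip -` Pi\<^sub>E I A \<inter> ?\<Omega>)"
      using A I by (intro emeasure_distr measurable_zip_PiM sets_PiM_I_finite) auto
    also have "\<dots> = (\<integral>\<^sup>+xs. emeasure (PiM I L) (Pi\<^sub>E I (\<lambda>i. Pair (xs i) -` A i)) \<partial>PiM I M)"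
      using A I by (subst L.emeasure_pair_measure_alt)
        (auto intro!: nn_integral_cong measurable_zip_PiM sets_PiM_I_finite simp: slice
          simp del: vimage_Int)
    also have "\<dots> = (\<integral>\<^sup>+xs. (\<Prod>i\<in>I. emeasure (L i) (Pair (xs i) -` A i)) \<partial>PiM I M)"
      using A by (intro nn_integral_cong L.emeasure_PiM[OF I]) (auto intro: measurable_Pair2)
    also have "\<dots> = (\<Prod>i\<in>I. \<integral>\<^sup>+x. emeasure (L i) (Pair x -` A i) \<partial>M i)"
      using A by (intro M.product_nn_integral_prod I)
        (auto intro: sigma_finite_measure.measurable_emeasure_Pair[OF L])
    also have "\<dots> = (\<Prod>i\<in>I. emeasure (M i \<Otimes>\<^sub>M L i) (A i))"
      using A L
      by (intro prod.cong refl sigma_finite_measure.emeasure_pair_measure_alt[symmetric]) auto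
    finally show "emeasure ?D (Pi\<^sub>E I A) = (\<Prod>i\<in>I. emeasure (M i \<Otimes>\<^sub>M L i) (A i))" .
  qed simp
qed

lemma integral_PiM_pair_measure:
  fixes f :: "('i \<Rightarrow> 'a \<times> 'b) \<Rightarrow> 'c::{banach, second_countable_topology}"
  assumes I: "finite I"
    and M: "\<And>i. sigma_finite_measure (M i)" and L: "\<And>i. sigma_finite_measure (L i)"
    and f: "integrable (PiM I (\<lambda>i. M i \<Otimes>\<^sub>M L i)) f"
  shows "(\<integral>S. f S \<partial>PiM I (\<lambda>i. M i \<Otimes>\<^sub>M L i))
           = (\<integral>xs. (\<integral>ys. f (\<lambda>i\<in>I. (xs i, ys i)) \<partial>PiM I L) \<partial>PiM I M)"
proof -
  interpret M: finite_product_sigma_finite M I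
    by (intro finite_product_sigma_finite.intro product_sigma_finite.intro
        finite_product_sigma_finite_axioms.intro M I)
  interpret L: finite_product_sigma_finite L I
    by (intro finite_product_sigma_finite.intro product_sigma_finite.intro
        finite_product_sigma_finite_axioms.intro L I)
  interpret pair_sigma_finite "PiM I M" "PiM I L" ..
  let ?zip = "\<lambda>(xs, ys). \<lambda>i\<in>I. (xs i, ys i)"
  have f_zip: "integrable (PiM I M \<Otimes>\<^sub>M PiM I L) (\<lambda>z. f (?zip z))"
    using f integrable_distr_eq[OF measurable_zip_PiM borel_measurable_integrable[OF f]]
    by (simp add: distr_PiM_pair_measure_zip[OF I M L])
  have "(\<integral>S. f S \<partial>PiM I (\<lambda>i. M i \<Otimes>\<^sub>M L i)) = (\<integral>z. f (?zip z) \<partial>(PiM I M \<Otimes>\<^sub>M PiM I L))"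
    using f by (subst distr_PiM_pair_measure_zip[OF I M L, symmetric])
      (simp add: integral_distr measurable_zip_PiM)
  also have "\<dots> = (\<integral>xs. (\<integral>ys. f (\<lambda>i\<in>I. (xs i, ys i)) \<partial>PiM I L) \<partial>PiM I M)"
    using integral_fst'[OF f_zip] by simp
  finally show ?thesis .
qed

lemma PiM_measure_pmf_eq_distr_Pi_pmf:
  assumes I: "finite I"
  shows "PiM I (\<lambda>i. measure_pmf (p i))
           = distr (measure_pmf (Pi_pmf I d p)) (PiM I (\<lambda>i. measure_pmf (p i))) (\<lambda>f. restrict f I)"
    (is "_ = ?D")
proof (rule sym, rule product_sigma_finite.PiM_eqI[OF _ I])
  show "product_sigma_finite (\<lambda>i. measure_pmf (p i))"
    by unfold_locales
next
  fix A assume A: "\<And>i. i \<in> I \<Longrightarrow> A i \<in> sets (measure_pmf (p i))"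
  have on_support: "(\<lambda>f. restrict f I) -` Pi\<^sub>E I A \<inter> set_pmf (Pi_pmf I d p)
      = PiE_dflt I d A \<inter> set_pmf (Pi_pmf I d p)"
    using set_Pi_pmf_subset[OF I, of d p] by (auto simp: PiE_dflt_def PiE_iff)
  have "emeasure ?D (Pi\<^sub>E I A) = emeasure (Pi_pmf I d p) ((\<lambda>f. restrict f I) -` Pi\<^sub>E I A)"
    using A I by (subst emeasure_distr) (auto simp: space_PiM sets_PiM_I_finite)
  also have "\<dots> = emeasure (Pi_pmf I d p) (PiE_dflt I d A)"
    by (subst (1 2) emeasure_Int_set_pmf[symmetric]) (simp only: on_support)
  also have "\<dots> = (\<Prod>i\<in>I. emeasure (p i) (A i))"
    by (simp add: measure_pmf.emeasure_eq_measure measure_Pi_pmf_PiE_dflt I prod_ennreal)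
  finally show "emeasure ?D (Pi\<^sub>E I A) = (\<Prod>i\<in>I. emeasure (p i) (A i))" .
qed simp

lemma map_pmf_card_Pi_pmf_bernoulli:
  assumes I: "finite I" and A: "A \<subseteq> I" and p: "p \<in> {0..1}"
  shows "map_pmf (\<lambda>b. card {i\<in>A. b i}) (Pi_pmf I dflt (\<lambda>_. bernoulli_pmf p))
           = binomial_pmf (card A) p"
proof -
  have "binomial_pmf (card A) p
      = map_pmf (\<lambda>b. card {i\<in>A. b i}) (Pi_pmf A dflt (\<lambda>_. bernoulli_pmf p))"
    using I A p by (intro binomial_pmf_altdef') (auto intro: finite_subset)
  also have "\<dots> = map_pmf (\<lambda>b. card {i\<in>A. b i}) (Pi_pmf I dflt (\<lambda>_. bernoulli_pmf p))"
    using A by (simp add: Pi_pmf_subset[OF I A] pmf.map_comp o_def conj_commute cong: conj_cong)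
  finally show ?thesis ..
qed

lemma sum_signs_pos_iff_minority:
  assumes "finite A" and "odd (card A)"
  shows "0 < (\<Sum>i\<in>A. if b i then -1 else 1 :: real) \<longleftrightarrow> card {i\<in>A. b i} \<le> card A div 2"
proof -
  have "(\<Sum>i\<in>A. if b i then -1 else 1 :: real) = (\<Sum>i\<in>A. 1 - 2 * of_bool (b i))"
    by (intro sum.cong) auto
  also have "\<dots> = real (card A) - 2 * real (card (A \<inter> {i. b i}))"
    using assms(1) by (simp add: sum_subtractf sum_distrib_left[symmetric] sum_of_bool_eq)
  finally show ?thesis
    using assms(2) by (auto simp: Int_def conj_commute elim!: oddE)
qed

lemma integral_pmf_sign_indicator:
  "(\<integral>x. (if x \<in> B then 1 else -1 :: real) \<partial>measure_pmf p) = -1 + 2 * measure_pmf.prob p B"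
proof -
  have "(\<lambda>x. if x \<in> B then 1 else -1 :: real) = (\<lambda>x. 2 * indicator B x - 1)"
    by (auto simp: fun_eq_iff)
  moreover have "integrable p (indicator B :: _ \<Rightarrow> real)"
    by (intro integrable_real_indicator) (simp_all add: measure_pmf.emeasure_eq_measure)
  ultimately show ?thesis
    by (simp add: Bochner_Integration.integral_diff)
qed

lemma integral_majority_vote_label_pmf:
  fixes A I :: "'i set"
  assumes I: "finite I" and A: "A \<subseteq> I" and k: "card A = k" "odd k" and \<alpha>: "\<alpha> \<in> {0..1}"
  shows "(\<integral>ys. (if (\<Sum>i\<in>A. ys i) > 0 then 1 else -1 :: real)
             \<partial>PiM I (\<lambda>_. measure_pmf (label_pmf \<alpha>)))
           = -1 + 2 * phi k \<alpha>"
proof -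
  let ?vote = "\<lambda>ys :: 'i \<Rightarrow> real. if (\<Sum>i\<in>A. ys i) > 0 then 1 else -1 :: real"
  let ?sign = "\<lambda>b. if b then -1 else 1 :: real"
  let ?B = "Pi_pmf I False (\<lambda>_. bernoulli_pmf \<alpha>)"
  have "(\<lambda>ys. ys i) \<in> borel_measurable (PiM I (\<lambda>_. measure_pmf (label_pmf \<alpha>)))" if "i \<in> A" for i
    using that A by (intro measurable_compose[OF measurable_component_singleton]) auto
  then have "?vote \<in> borel_measurable (PiM I (\<lambda>_. measure_pmf (label_pmf \<alpha>)))"
    by measurable
  then have "(\<integral>ys. ?vote ys \<partial>PiM I (\<lambda>_. measure_pmf (label_pmf \<alpha>)))
      = (\<integral>ys. ?vote ys \<partial>Pi_pmf I 1 (\<lambda>_. label_pmf \<alpha>))"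
    using A by (subst PiM_measure_pmf_eq_distr_Pi_pmf[OF I, of _ 1])
      (simp add: integral_distr space_PiM subset_iff)
  also have "Pi_pmf I 1 (\<lambda>_. label_pmf \<alpha>) = map_pmf ((\<circ>) ?sign) ?B"
    unfolding label_pmf_def using I by (intro Pi_pmf_map) auto
  also have "(\<integral>ys. ?vote ys \<partial>map_pmf ((\<circ>) ?sign) ?B)
      = (\<integral>b. (if card {i\<in>A. b i} \<in> {..k div 2} then 1 else -1) \<partial>?B)"
    using sum_signs_pos_iff_minority[of A] A I k by (simp add: finite_subset)
  also have "\<dots> = (\<integral>c. (if c \<in> {..k div 2} then 1 else -1) \<partial>map_pmf (\<lambda>b. card {i\<in>A. b i}) ?B)"
    by simp
  also have "map_pmf (\<lambda>b. card {i\<in>A. b i}) ?B = binomial_pmf k \<alpha>"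
    using map_pmf_card_Pi_pmf_bernoulli[OF I A \<alpha>] k by simp
  finally show ?thesis
    using integral_pmf_sign_indicator[of "binomial_pmf k \<alpha>" "{..k div 2}"] by (simp add: phi_def)
qed

lemma knn_classifier_zip_eq_vote:
  assumes "knn_selection n k N"
  obtains A where "A \<subseteq> {..<n}" and "card A = k"
    and "\<And>ys. knn_classifier N (\<lambda>i\<in>{..<n}. (xs i, ys i)) x
                = (if (\<Sum>i\<in>A. ys i) > 0 then 1 else -1)"
proof -
  \<comment> \<open>Outside \<open>{..<n}\<close> the zipped sample is \<open>undefined\<close>: its first component is junk, but the
      same junk for every label vector.\<close>
  let ?features = "\<lambda>i. fst ((\<lambda>i\<in>{..<n}. (xs i, 0 :: real)) i)"
  have A: "N ?features x \<subseteq> {..<n}" "card (N ?features x) = k"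
    using assms by (auto simp: knn_selection_def)
  have "knn_classifier N (\<lambda>i\<in>{..<n}. (xs i, ys i)) x
      = (if (\<Sum>i\<in>N ?features x. ys i) > 0 then 1 else -1)" for ys
  proof -
    have features: "(\<lambda>i. fst ((\<lambda>i\<in>{..<n}. (xs i, ys i)) i)) = ?features"
      by (simp add: fun_eq_iff)
    show ?thesis
      using A(1) unfolding knn_classifier_def features by (simp add: subset_iff)
  qed
  with A show thesis
    by (rule that)
qed

theorem proposition19:
  fixes M :: "'a::metric_space measure" and \<alpha> :: real and k n :: nat
    and N :: "(nat \<Rightarrow> 'a) \<Rightarrow> 'a \<Rightarrow> nat set" and x :: 'a
  assumes "prob_space M"
    and "0 < \<alpha>" and "\<alpha> \<le> 1"
    and "odd k" and "k \<le> n"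
    and "knn_selection n k N"
    and "(\<lambda>S. knn_classifier N S x)
           \<in> borel_measurable (PiM {..<n} (\<lambda>_. M \<Otimes>\<^sub>M measure_pmf (label_pmf \<alpha>)))"
  shows "(\<integral>S. knn_classifier N S x \<partial>(PiM {..<n} (\<lambda>_. M \<Otimes>\<^sub>M measure_pmf (label_pmf \<alpha>))))
           = -1 + 2 * phi k \<alpha>"
proof -
  let ?L = "measure_pmf (label_pmf \<alpha>)"
  interpret M: prob_space M by fact
  interpret features: prob_space "PiM {..<n} (\<lambda>_. M)"
    by (intro prob_space_PiM M.prob_space_axioms)
  interpret sample: prob_space "PiM {..<n} (\<lambda>_. M \<Otimes>\<^sub>M ?L)"
    by (intro prob_space_PiM prob_space_pair M.prob_space_axioms prob_space_measure_pmf)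
  have "integrable (PiM {..<n} (\<lambda>_. M \<Otimes>\<^sub>M ?L)) (\<lambda>S. knn_classifier N S x)"
    using assms(7) by (intro sample.integrable_const_bound[where B = 1])
      (auto simp: knn_classifier_def)
  then have "(\<integral>S. knn_classifier N S x \<partial>PiM {..<n} (\<lambda>_. M \<Otimes>\<^sub>M ?L))
      = (\<integral>xs. (\<integral>ys. knn_classifier N (\<lambda>i\<in>{..<n}. (xs i, ys i)) x \<partial>PiM {..<n} (\<lambda>_. ?L))
          \<partial>PiM {..<n} (\<lambda>_. M))"
    by (intro integral_PiM_pair_measure finite_lessThan M.sigma_finite_measure_axioms
        measure_pmf.sigma_finite_measure_axioms)
  also have "\<dots> = (\<integral>xs. -1 + 2 * phi k \<alpha> \<partial>PiM {..<n} (\<lambda>_. M))"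
  proof (rule Bochner_Integration.integral_cong[OF refl])
    fix xs :: "nat \<Rightarrow> 'a"
    obtain A where "A \<subseteq> {..<n}" "card A = k"
      "\<And>ys. knn_classifier N (\<lambda>i\<in>{..<n}. (xs i, ys i)) x = (if (\<Sum>i\<in>A. ys i) > 0 then 1 else -1)"
      using knn_classifier_zip_eq_vote[OF assms(6), where xs = xs and x = x] by blast
    then show "(\<integral>ys. knn_classifier N (\<lambda>i\<in>{..<n}. (xs i, ys i)) x \<partial>PiM {..<n} (\<lambda>_. ?L))
        = -1 + 2 * phi k \<alpha>"
      using integral_majority_vote_label_pmf[of "{..<n}" A k \<alpha>] assms(2-4) by simp
  qed
  also have "\<dots> = -1 + 2 * phi k \<alpha>"
    by (simp add: features.prob_space)
  finally show ?thesis .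
qed

end
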